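(* Let $(\mathfrak{g},V,\Theta)$ be a Lie-Leibniz triple with associated graded Lie algebra $T_{\leq-1}$ and differential $\partial$. Then $m\circ\partial+\partial\circ m=0$ on $\Lambda^2(T_{\leq-1})$; that is, for every $i\geq1$, $\partial_{-i}\circ m_{-i-1}=-m_{-i}\circ\partial$ as maps $\Lambda^2(T_{\leq-1})|_{-i-2}\to T_{-i}$, where $\partial$ acts on $\Lambda^2$ as a graded derivation.
   Context: A (left) Leibniz algebra is a vector space $V$ with bilinear $\circ$ satisfying $x\circ(y\circ z)=(x\circ y)\circ z+y\circ(x\circ z)$; $\{x,y\}=\frac12(x\circ y+y\circ x)$. A Lie-Leibniz triple $(\mathfrak{g},V,\Theta)$ consists of a Lie algebra $\mathfrak{g}$, a $\mathfrak{g}$-module $V$ (action $a\cdot x$) with a Leibniz product $\circ$, and a linear map $\Theta:V\to\mathfrak{g}$ with $x\circ y=\Theta(x)\cdot y$ and $\Theta(x\circ y)=[\Theta(x),\Theta(y)]$. Associated graded Lie algebra: let $K$ be the largest $\mathfrak{g}$-submodule of $S^2(V)$ in the kernel of $x\odot y\mapsto\{x,y\}$; $F$ the free graded Lie algebra on $V[1]$ (degree $-1$), $F_{-2}\cong S^2(V)$, $\mathfrak g$ acting by derivations; $K_{-2}=K$, $K_{-i}=\sum_{j=1}^{i-2}[F_{-j},K_{-i+j}]$ ($i\geq3$); $T_{\leq-1}=F/K_\bullet$, $T_{-1}=V[1]$, with induced bracket $\llbracket\,.\,,.\,\rrbracket$ and $\mathfrak{g}$-action. Let $\mathfrak{h}=\mathrm{Im}\Theta$.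 The differential $\partial=(\partial_{-i}:T_{-i-1}\to T_{-i})_{i\geq1}$ is the unique family of $\mathfrak{h}$-equivariant linear maps with $\partial\llbracket u,v\rrbracket=2\{u,v\}$, $\partial\llbracket u,x\rrbracket=\Theta(u)\cdot x-\llbracket u,\partial x\rrbracket$, $\partial\llbracket x,y\rrbracket=\llbracket\partial x,y\rrbracket+(-1)^{|x|}\llbracket x,\partial y\rrbracket$ ($u,v\in T_{-1}$, $x,y\in T_{\leq-2}$); it is set to $0$ on $T_{-1}$ and extended to $\Lambda^2(T_{\leq-1})$ by $\partial(x\wedge y)=\partial x\wedge y+(-1)^{|x|}x\wedge\partial y$. The map $m:\Lambda^2(T_{\leq-1})\to T_{\leq-1}$ is $m(x\wedge y)=\Theta(x)\cdot y-(-1)^{|x||y|}\Theta(y)\cdot x$ with $\Theta:=0$ on $T_{\leq-2}$ (graded exterior algebra convention $x\wedge y=-(-1)^{|x||y|}y\wedge x$); $m_{-i}$ denotes its component landing in $T_{-i}$. *)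

theory Defs
  imports Complex_Main "HOL-Library.Function_Algebras"
begin

definition bilinear_map ::
  "('k::field \<Rightarrow> 'a::ab_group_add \<Rightarrow> 'a) \<Rightarrow> ('k \<Rightarrow> 'b::ab_group_add \<Rightarrow> 'b) \<Rightarrow>
   ('k \<Rightarrow> 'c::ab_group_add \<Rightarrow> 'c) \<Rightarrow> ('a \<Rightarrow> 'b \<Rightarrow> 'c) \<Rightarrow> bool" where
  "bilinear_map sA sB sC f \<longleftrightarrow>
     (\<forall>a a' b. f (a + a') b = f a b + f a' b) \<and>
     (\<forall>a b b'. f a (b + b') = f a b + f a b') \<and>
     (\<forall>c a b. f (sA c a) b = sC c (f a b)) \<and>
     (\<forall>c a b. f a (sB c b) = sC c (f a b))"

definition lie_algebra :: "('k::field \<Rightarrow> 'g::ab_group_add \<Rightarrow> 'g) \<Rightarrow> ('g \<Rightarrow> 'g \<Rightarrow> 'g) \<Rightarrow> bool" where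
  "lie_algebra sG brG \<longleftrightarrow>
     Vector_Spaces.vector_space sG \<and> bilinear_map sG sG sG brG \<and>
     (\<forall>a. brG a a = 0) \<and>
     (\<forall>a b c. brG a (brG b c) = brG (brG a b) c + brG b (brG a c))"

definition lie_module ::
  "('k::field \<Rightarrow> 'g::ab_group_add \<Rightarrow> 'g) \<Rightarrow> ('g \<Rightarrow> 'g \<Rightarrow> 'g) \<Rightarrow>
   ('k \<Rightarrow> 'v::ab_group_add \<Rightarrow> 'v) \<Rightarrow> ('g \<Rightarrow> 'v \<Rightarrow> 'v) \<Rightarrow> bool" where
  "lie_module sG brG sV act \<longleftrightarrow>
     Vector_Spaces.vector_space sV \<and> bilinear_map sG sV sV act \<and>
     (\<forall>a b x. act (brG a b) x = act a (act b x) - act b (act a x))"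

definition leib :: "('g \<Rightarrow> 'v \<Rightarrow> 'v) \<Rightarrow> ('v \<Rightarrow> 'g) \<Rightarrow> 'v \<Rightarrow> 'v \<Rightarrow> 'v" where
  "leib act Th x y = act (Th x) y"

definition lie_leibniz_triple ::
  "('k::field \<Rightarrow> 'g::ab_group_add \<Rightarrow> 'g) \<Rightarrow> ('g \<Rightarrow> 'g \<Rightarrow> 'g) \<Rightarrow>
   ('k \<Rightarrow> 'v::ab_group_add \<Rightarrow> 'v) \<Rightarrow> ('g \<Rightarrow> 'v \<Rightarrow> 'v) \<Rightarrow> ('v \<Rightarrow> 'g) \<Rightarrow> bool" where
  "lie_leibniz_triple sG brG sV act Th \<longleftrightarrow>
     lie_algebra sG brG \<and> lie_module sG brG sV act \<and>
     Vector_Spaces.linear sV sG Th \<and>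
     bilinear_map sV sV sV (leib act Th) \<and>
     (\<forall>x y z. leib act Th x (leib act Th y z) =
               leib act Th (leib act Th x y) z + leib act Th y (leib act Th x z)) \<and>
     (\<forall>x y. Th (leib act Th x y) = brG (Th x) (Th y))"

definition curly :: "('k::field \<Rightarrow> 'v::ab_group_add \<Rightarrow> 'v) \<Rightarrow> ('g \<Rightarrow> 'v \<Rightarrow> 'v) \<Rightarrow> ('v \<Rightarrow> 'g) \<Rightarrow> 'v \<Rightarrow> 'v \<Rightarrow> 'v" where
  "curly sV act Th x y = sV (1/2) (leib act Th x y + leib act Th y x)"

section \<open>Free vector space on binary trees with leaves in V (free non-associative algebra)\<close>

datatype 'v ltree = Lf 'v | Nd "'v ltree" "'v ltree"

fun nleaves :: "'v ltree \<Rightarrow> nat" where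
  "nleaves (Lf _) = 1"
| "nleaves (Nd a b) = nleaves a + nleaves b"

text \<open>Elements: finitely supported functions  'v ltree \<Rightarrow> 'k.  A tree with n leaves has degree -n.\<close>
definition fin :: "('v ltree \<Rightarrow> 'k::zero) \<Rightarrow> bool" where
  "fin f \<longleftrightarrow> finite {t. f t \<noteq> 0}"

definition hom :: "nat \<Rightarrow> ('v ltree \<Rightarrow> 'k::zero) \<Rightarrow> bool" where
  "hom n f \<longleftrightarrow> fin f \<and> (\<forall>t. f t \<noteq> 0 \<longrightarrow> nleaves t = n)"

definition delta :: "'v ltree \<Rightarrow> 'v ltree \<Rightarrow> 'k::{zero,one}" where
  "delta t = (\<lambda>u. if u = t then 1 else 0)"

definition smul :: "'k::times \<Rightarrow> ('v ltree \<Rightarrow> 'k) \<Rightarrow> ('v ltree \<Rightarrow> 'k)" where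
  "smul c f = (\<lambda>u. c * f u)"

definition brk :: "('v ltree \<Rightarrow> 'k::{zero,times}) \<Rightarrow> ('v ltree \<Rightarrow> 'k) \<Rightarrow> ('v ltree \<Rightarrow> 'k)" where
  "brk f h = (\<lambda>u. case u of Lf _ \<Rightarrow> 0 | Nd a b \<Rightarrow> f a * h b)"

definition sgn1 :: "nat \<Rightarrow> 'k::field" where
  "sgn1 n = (-1) ^ n"

inductive_set ideal_gen :: "('v ltree \<Rightarrow> 'k::field) set \<Rightarrow> ('v ltree \<Rightarrow> 'k) set"
  for S :: "('v ltree \<Rightarrow> 'k) set" where
  gen: "s \<in> S \<Longrightarrow> s \<in> ideal_gen S"
| zero: "0 \<in> ideal_gen S"
| add: "f \<in> ideal_gen S \<Longrightarrow> h \<in> ideal_gen S \<Longrightarrow> f + h \<in> ideal_gen S"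
| scal: "f \<in> ideal_gen S \<Longrightarrow> smul c f \<in> ideal_gen S"
| left: "f \<in> ideal_gen S \<Longrightarrow> fin h \<Longrightarrow> brk h f \<in> ideal_gen S"
| right: "f \<in> ideal_gen S \<Longrightarrow> fin h \<Longrightarrow> brk f h \<in> ideal_gen S"

text \<open>Relations making leaves linear in V.\<close>
definition lin_rel :: "('k::field \<Rightarrow> 'v::ab_group_add \<Rightarrow> 'v) \<Rightarrow> ('v ltree \<Rightarrow> 'k) set" where
  "lin_rel sV =
     {delta (Lf (x + y)) - delta (Lf x) - delta (Lf y) | x y. True} \<union>
     {delta (Lf (sV c x)) - smul c (delta (Lf x)) | c x. True}"

text \<open>Graded antisymmetry and graded Jacobi (generators in degree -1).\<close>
definition antisym_rel :: "('v ltree \<Rightarrow> 'k::field) set" where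
  "antisym_rel = {delta (Nd a b) + smul (sgn1 (nleaves a * nleaves b)) (delta (Nd b a)) | a b. True}"

definition jacobi_rel :: "('v ltree \<Rightarrow> 'k::field) set" where
  "jacobi_rel = {delta (Nd a (Nd b c)) - delta (Nd (Nd a b) c)
                   - smul (sgn1 (nleaves a * nleaves b)) (delta (Nd b (Nd a c))) | a b c. True}"

text \<open>Free graded Lie algebra F on V[1]:  F = FV / ideal_gen lie_rels.\<close>
definition lie_rels :: "('k::field \<Rightarrow> 'v::ab_group_add \<Rightarrow> 'v) \<Rightarrow> ('v ltree \<Rightarrow> 'k) set" where
  "lie_rels sV = lin_rel sV \<union> antisym_rel \<union> jacobi_rel"

fun actTree :: "('g \<Rightarrow> 'v \<Rightarrow> 'v) \<Rightarrow> 'g \<Rightarrow> 'v ltree \<Rightarrow> ('v ltree \<Rightarrow> 'k::field)" where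
  "actTree act a (Lf x) = delta (Lf (act a x))"
| "actTree act a (Nd s t) = brk (actTree act a s) (delta t) + brk (delta s) (actTree act a t)"

definition actFV :: "('g \<Rightarrow> 'v \<Rightarrow> 'v) \<Rightarrow> 'g \<Rightarrow> ('v ltree \<Rightarrow> 'k::field) \<Rightarrow> ('v ltree \<Rightarrow> 'k)" where
  "actFV act a f = (\<lambda>u. \<Sum>t\<in>{t. f t \<noteq> 0}. f t * actTree act a t u)"

text \<open>T_{-1} = V:  the class of a degree -1 element f is ev f.\<close>
definition ev :: "('k::field \<Rightarrow> 'v::ab_group_add \<Rightarrow> 'v) \<Rightarrow> ('v ltree \<Rightarrow> 'k) \<Rightarrow> 'v" where
  "ev sV f = (\<Sum>t\<in>{t. f t \<noteq> 0}. sV (f t) (case t of Lf x \<Rightarrow> x | _ \<Rightarrow> 0))"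

text \<open>F_{-2} = S^2(V) via [u,v] <-> u \<odot> v; the map  x \<odot> y \<mapsto> {x,y}  read on F_{-2}.\<close>
definition phi2 :: "('k::field \<Rightarrow> 'v::ab_group_add \<Rightarrow> 'v) \<Rightarrow> ('g \<Rightarrow> 'v \<Rightarrow> 'v) \<Rightarrow> ('v \<Rightarrow> 'g)
                    \<Rightarrow> ('v ltree \<Rightarrow> 'k) \<Rightarrow> 'v" where
  "phi2 sV act Th f = (\<Sum>t\<in>{t. f t \<noteq> 0}. sV (f t)
      (case t of Nd (Lf x) (Lf y) \<Rightarrow> curly sV act Th x y | _ \<Rightarrow> 0))"

text \<open>K: largest g-submodule of S^2(V) = F_{-2} contained in the kernel of  x \<odot> y \<mapsto> {x,y}
  (union of all g-invariant subspaces of the degree -2 part lying in the kernel).\<close>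
definition Kset :: "('k::field \<Rightarrow> 'v::ab_group_add \<Rightarrow> 'v) \<Rightarrow> ('g \<Rightarrow> 'v \<Rightarrow> 'v) \<Rightarrow> ('v \<Rightarrow> 'g)
                    \<Rightarrow> ('v ltree \<Rightarrow> 'k) set" where
  "Kset sV act Th = \<Union>{W. W \<subseteq> {f. hom 2 f} \<and> 0 \<in> W \<and>
        (\<forall>f\<in>W. \<forall>h\<in>W. f + h \<in> W) \<and> (\<forall>c. \<forall>f\<in>W. smul c f \<in> W) \<and>
        (\<forall>a. \<forall>f\<in>W. actFV act a f \<in> W) \<and>
        (\<forall>f\<in>W. phi2 sV act Th f = 0)}"

text \<open>T_{\<le>-1} = F / K_\<bullet> = FV / Irel, where Irel is the ideal generated by the free Lie relations
  and K (the ideal K_\<bullet> of F generated by K_{-2} = K is its image in F).\<close>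
definition Irel :: "('k::field \<Rightarrow> 'v::ab_group_add \<Rightarrow> 'v) \<Rightarrow> ('g \<Rightarrow> 'v \<Rightarrow> 'v) \<Rightarrow> ('v \<Rightarrow> 'g)
                    \<Rightarrow> ('v ltree \<Rightarrow> 'k) set" where
  "Irel sV act Th = ideal_gen (lie_rels sV \<union> Kset sV act Th)"

text \<open>\<Theta>(x)\<cdot>y for x \<in> T_{-p}, with \<Theta> := 0 on T_{\<le>-2}.\<close>
definition thact :: "('k::field \<Rightarrow> 'v::ab_group_add \<Rightarrow> 'v) \<Rightarrow> ('g \<Rightarrow> 'v \<Rightarrow> 'v) \<Rightarrow> ('v \<Rightarrow> 'g)
                     \<Rightarrow> nat \<Rightarrow> ('v ltree \<Rightarrow> 'k) \<Rightarrow> ('v ltree \<Rightarrow> 'k) \<Rightarrow> ('v ltree \<Rightarrow> 'k)" where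
  "thact sV act Th p x y = (if p = 1 then actFV act (Th (ev sV x)) y else 0)"

definition mwedge :: "('k::field \<Rightarrow> 'v::ab_group_add \<Rightarrow> 'v) \<Rightarrow> ('g \<Rightarrow> 'v \<Rightarrow> 'v) \<Rightarrow> ('v \<Rightarrow> 'g)
                     \<Rightarrow> nat \<Rightarrow> nat \<Rightarrow> ('v ltree \<Rightarrow> 'k) \<Rightarrow> ('v ltree \<Rightarrow> 'k) \<Rightarrow> ('v ltree \<Rightarrow> 'k)" where
  "mwedge sV act Th p q x y =
     thact sV act Th p x y - smul (sgn1 (p * q)) (thact sV act Th q y x)"

section \<open>The differential \<partial> (on representatives, equations modulo Irel)\<close>

definition is_differential ::
  "('k::field \<Rightarrow> 'v::ab_group_add \<Rightarrow> 'v) \<Rightarrow> ('g \<Rightarrow> 'v \<Rightarrow> 'v) \<Rightarrow> ('v \<Rightarrow> 'g)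
   \<Rightarrow> (('v ltree \<Rightarrow> 'k) \<Rightarrow> ('v ltree \<Rightarrow> 'k)) \<Rightarrow> bool" where
  "is_differential sV act Th D \<longleftrightarrow>
     \<comment> \<open>linear\<close>
     (\<forall>f h. fin f \<longrightarrow> fin h \<longrightarrow> D (f + h) = D f + D h) \<and>
     (\<forall>c f. fin f \<longrightarrow> D (smul c f) = smul c (D f)) \<and>
     \<comment> \<open>well defined on the quotient T\<close>
     (\<forall>f \<in> Irel sV act Th. D f \<in> Irel sV act Th) \<and>
     \<comment> \<open>\<partial>_{-i} : T_{-i-1} \<rightarrow> T_{-i} (i \<ge> 1), and \<partial> = 0 on T_{-1}\<close>
     (\<forall>n f. n \<ge> 1 \<longrightarrow> hom (Suc n) f \<longrightarrow> hom n (D f)) \<and>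
     (\<forall>f. hom 1 f \<longrightarrow> D f \<in> Irel sV act Th) \<and>
     \<comment> \<open>equivariance under h = Im \<Theta>\<close>
     (\<forall>x f. fin f \<longrightarrow> D (actFV act (Th x) f) - actFV act (Th x) (D f) \<in> Irel sV act Th) \<and>
     \<comment> \<open>\<partial>[u,v] = 2{u,v}\<close>
     (\<forall>u v. hom 1 u \<longrightarrow> hom 1 v \<longrightarrow>
        D (brk u v) - smul 2 (delta (Lf (curly sV act Th (ev sV u) (ev sV v)))) \<in> Irel sV act Th) \<and>
     \<comment> \<open>\<partial>[u,x] = \<Theta>(u)\<cdot>x - [u,\<partial>x]\<close>
     (\<forall>u x p. hom 1 u \<longrightarrow> p \<ge> 2 \<longrightarrow> hom p x \<longrightarrow>
        D (brk u x) - (actFV act (Th (ev sV u)) x - brk u (D x)) \<in> Irel sV act Th) \<and>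
     \<comment> \<open>\<partial>[x,y] = [\<partial>x,y] + (-1)^{|x|}[x,\<partial>y]\<close>
     (\<forall>x y p q. p \<ge> 2 \<longrightarrow> q \<ge> 2 \<longrightarrow> hom p x \<longrightarrow> hom q y \<longrightarrow>
        D (brk x y) - (brk (D x) y + smul (sgn1 p) (brk x (D y))) \<in> Irel sV act Th)"

end

theory Submission
  imports Defs
begin

text \<open>
  The bracket of \<open>\<g>\<close> is alternating, so \<open>\<Theta>{u,v} = 1/2 ([\<Theta>u,\<Theta>v] + [\<Theta>v,\<Theta>u]) = 0\<close>;
  together with \<open>\<partial>[u,v] = 2{u,v}\<close> this shows that \<open>\<Theta>\<close> vanishes on \<open>\<partial>(T\<^sub>-\<^sub>2)\<close>, and it
  vanishes on \<open>T\<^sub>\<le>\<^sub>-\<^sub>2\<close> by definition. Hence every term \<open>\<Theta>(\<partial>x)\<cdot>y\<close> of \<open>m(\<partial>(x \<wedge> y))\<close>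
  is the action of \<open>0 \<in> \<g>\<close>, and the remaining terms pair up as
  \<open>\<partial>(\<Theta>(u)\<cdot>z) - \<Theta>(u)\<cdot>\<partial>z\<close> with \<open>u\<close> of degree \<open>-1\<close>, which vanish by equivariance of \<open>\<partial>\<close>
  under \<open>\<h> = Im \<Theta>\<close>. Everything holds modulo the ideal \<open>Irel\<close>; to compute \<open>\<Theta>\<close> of a class
  in \<open>T\<^sub>-\<^sub>1\<close> from a representative we use that the evaluation \<open>ev\<close>, which identifies
  \<open>T\<^sub>-\<^sub>1\<close> with \<open>V\<close>, kills \<open>Irel\<close>.
\<close>

lemma sum_apply: "(\<Sum>t\<in>S. g t) u = (\<Sum>t\<in>S. g t u)"
  by (induction S rule: infinite_finite_induct) auto

lemma fin_zero [simp]: "fin 0"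
  by (simp add: fin_def)

lemma fin_delta [simp]: "fin (delta t)"
  by (simp add: fin_def delta_def)

lemma hom_delta: "hom (nleaves t) (delta t)"
  unfolding hom_def by (rule conjI[OF fin_delta]) (simp add: delta_def)

lemma hom_fin: "hom n f \<Longrightarrow> fin f"
  by (simp add: hom_def)

lemma smul_zero [simp]: "smul c 0 = (0 :: _ \<Rightarrow> 'k::mult_zero)"
  by (simp add: smul_def fun_eq_iff)

lemma smul_minus_one: "smul (- 1) f = - (f :: _ \<Rightarrow> 'k::ring_1)"
  by (simp add: smul_def fun_eq_iff)

lemma fin_add: "fin (f :: _ \<Rightarrow> 'k::monoid_add) \<Longrightarrow> fin h \<Longrightarrow> fin (f + h)"
  unfolding fin_def by (rule finite_subset[of _ "{t. f t \<noteq> 0} \<union> {t. h t \<noteq> 0}"]) auto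

lemma fin_diff: "fin (f :: _ \<Rightarrow> 'k::group_add) \<Longrightarrow> fin h \<Longrightarrow> fin (f - h)"
  unfolding fin_def by (rule finite_subset[of _ "{t. f t \<noteq> 0} \<union> {t. h t \<noteq> 0}"]) auto

lemma fin_smul: "fin (f :: _ \<Rightarrow> 'k::mult_zero) \<Longrightarrow> fin (smul c f)"
  unfolding fin_def smul_def by (rule finite_subset[of _ "{t. f t \<noteq> 0}"]) auto

lemma fin_brk:
  assumes "fin (f :: _ \<Rightarrow> 'k::mult_zero)" and "fin h"
  shows "fin (brk f h)"
proof -
  have "{t. brk f h t \<noteq> 0} \<subseteq> (\<lambda>(a, b). Nd a b) ` ({t. f t \<noteq> 0} \<times> {t. h t \<noteq> 0})"
  proof
    fix t assume "t \<in> {t. brk f h t \<noteq> 0}"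
    then show "t \<in> (\<lambda>(a, b). Nd a b) ` ({t. f t \<noteq> 0} \<times> {t. h t \<noteq> 0})"
      by (cases t) (force simp: brk_def)+
  qed
  with assms show ?thesis
    unfolding fin_def by (meson finite_SigmaI finite_imageI finite_subset)
qed

lemma fin_sum: "(\<And>t. t \<in> S \<Longrightarrow> fin (g t :: _ \<Rightarrow> 'k::comm_monoid_add)) \<Longrightarrow> fin (\<Sum>t\<in>S. g t)"
  by (induction S rule: infinite_finite_induct) (auto intro: fin_add)

lemma fin_eq_sum_delta:
  assumes "fin (f :: _ \<Rightarrow> 'k::semiring_1)"
  shows "f = (\<Sum>t\<in>{t. f t \<noteq> 0}. smul (f t) (delta t))"
proof
  fix u
  have "(\<Sum>t\<in>{t. f t \<noteq> 0}. smul (f t) (delta t)) u = (\<Sum>t\<in>{t. f t \<noteq> 0}. if t = u then f t else 0)"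
    by (auto simp: sum_apply smul_def delta_def intro: sum.cong)
  also have "\<dots> = f u"
    using assms by (simp add: sum.If_cases fin_def)
  finally show "f u = (\<Sum>t\<in>{t. f t \<noteq> 0}. smul (f t) (delta t)) u" by simp
qed

lemma brk_delta_delta: "brk (delta s) (delta t) = (delta (Nd s t) :: _ \<Rightarrow> 'k::{mult_zero,monoid_mult})"
  by (auto simp: brk_def delta_def fun_eq_iff split: ltree.splits)

lemma fin_actTree: "fin (actTree act a t)"
proof (induction t)
  case (Nd t1 t2)
  then show ?case
    by (simp only: actTree.simps) (intro fin_add fin_brk; simp)
qed simp

lemma actFV_eq_sum: "fin f \<Longrightarrow> actFV act a f = (\<Sum>t\<in>{t. f t \<noteq> 0}. smul (f t) (actTree act a t))"
  by (simp add: actFV_def sum_apply smul_def fun_eq_iff)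

lemma fin_actFV: "fin f \<Longrightarrow> fin (actFV act a f)"
  by (simp add: actFV_eq_sum fin_sum fin_smul fin_actTree)

lemma nleaves_ge_1: "nleaves t \<ge> 1"
  by (induction t) auto

lemma nleaves_eq_1D: "nleaves t = 1 \<Longrightarrow> \<exists>a. t = Lf a"
proof (cases t)
  case (Nd l r)
  moreover assume "nleaves t = 1"
  ultimately show ?thesis
    using nleaves_ge_1[of l] nleaves_ge_1[of r] by simp
qed simp

lemma nleaves_eq_2D: "nleaves t = 2 \<Longrightarrow> \<exists>a b. t = Nd (Lf a) (Lf b)"
proof (cases t)
  case (Nd l r)
  moreover assume "nleaves t = 2"
  ultimately have "nleaves l = 1" "nleaves r = 1"
    using nleaves_ge_1[of l] nleaves_ge_1[of r] by auto
  with Nd show ?thesis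
    by (blast dest: nleaves_eq_1D)
qed simp

lemma ideal_gen_uminus: "f \<in> ideal_gen S \<Longrightarrow> - f \<in> ideal_gen S"
  using ideal_gen.scal[of f S "- 1"] by (simp add: smul_minus_one)

lemma ideal_gen_diff: "f \<in> ideal_gen S \<Longrightarrow> h \<in> ideal_gen S \<Longrightarrow> f - h \<in> ideal_gen S"
  using ideal_gen.add ideal_gen_uminus by (metis diff_conv_add_uminus)

lemma ideal_gen_sum: "(\<And>t. t \<in> A \<Longrightarrow> g t \<in> ideal_gen S) \<Longrightarrow> (\<Sum>t\<in>A. g t) \<in> ideal_gen S"
  by (induction A rule: infinite_finite_induct) (auto intro: ideal_gen.zero ideal_gen.add)

lemma fin_ideal_gen:
  assumes "f \<in> ideal_gen S" and "\<And>s. s \<in> S \<Longrightarrow> fin s"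
  shows "fin f"
  using assms by (induction rule: ideal_gen.induct) (auto intro: fin_add fin_smul fin_brk)

lemma fin_Irel: "f \<in> Irel sV act Th \<Longrightarrow> fin f"
  unfolding Irel_def
proof (rule fin_ideal_gen)
  fix s assume "s \<in> lie_rels sV \<union> Kset sV act Th"
  then show "fin s"
    unfolding lie_rels_def lin_rel_def antisym_rel_def jacobi_rel_def Kset_def hom_def
    by (auto intro!: fin_diff fin_add fin_smul)
qed

lemma zero_in_Irel: "0 \<in> Irel sV act Th"
  by (simp add: Irel_def ideal_gen.zero)

lemma delta_Lf_zero_in_Irel: "delta (Lf 0) \<in> Irel sV act Th"
proof -
  have "delta (Lf (0 + 0)) - delta (Lf 0) - delta (Lf 0) \<in> lin_rel sV"
    unfolding lin_rel_def by blast
  then have "- delta (Lf 0) \<in> Irel sV act Th"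
    unfolding Irel_def lie_rels_def by (simp add: ideal_gen.gen)
  then show ?thesis
    unfolding Irel_def by (metis ideal_gen_uminus minus_minus)
qed

lemma actFV_zero_in_Irel:
  assumes "\<And>v. act 0 v = 0" and "fin f"
  shows "actFV act 0 f \<in> Irel sV act Th"
proof -
  have "actTree act 0 t \<in> Irel sV act Th" for t
  proof (induction t)
    case (Nd t1 t2)
    then show ?case
      unfolding Irel_def actTree.simps by (intro ideal_gen.add ideal_gen.left ideal_gen.right) auto
  qed (simp add: assms(1) delta_Lf_zero_in_Irel)
  then show ?thesis
    unfolding actFV_eq_sum[OF assms(2)] Irel_def by (intro ideal_gen_sum ideal_gen.scal)
qed

context
  fixes sV :: "'k::field \<Rightarrow> 'v::ab_group_add \<Rightarrow> 'v"
  assumes vector_space: "Vector_Spaces.vector_space sV"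
begin

interpretation V: Vector_Spaces.vector_space sV
  by (rule vector_space)

lemma ev_eq_sum_superset:
  assumes "finite S" and "{t. f t \<noteq> 0} \<subseteq> S"
  shows "ev sV f = (\<Sum>t\<in>S. sV (f t) (case t of Lf x \<Rightarrow> x | _ \<Rightarrow> 0))"
  unfolding ev_def using assms by (intro sum.mono_neutral_left) auto

lemma ev_add:
  assumes "fin f" and "fin h"
  shows "ev sV (f + h) = ev sV f + ev sV h"
proof -
  let ?S = "{t. f t \<noteq> 0} \<union> {t. h t \<noteq> 0}"
  have S: "finite ?S"
    using assms by (simp add: fin_def)
  have "ev sV (f + h) = (\<Sum>t\<in>?S. sV ((f + h) t) (case t of Lf x \<Rightarrow> x | _ \<Rightarrow> 0))"
    by (rule ev_eq_sum_superset[OF S]) auto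
  also have "\<dots> = ev sV f + ev sV h"
    by (simp add: V.scale_left_distrib sum.distrib ev_eq_sum_superset[OF S])
  finally show ?thesis .
qed

lemma ev_smul:
  assumes "fin f"
  shows "ev sV (smul c f) = sV c (ev sV f)"
proof -
  let ?S = "{t. f t \<noteq> 0}"
  have S: "finite ?S"
    using assms by (simp add: fin_def)
  have "ev sV (smul c f) = (\<Sum>t\<in>?S. sV (smul c f t) (case t of Lf x \<Rightarrow> x | _ \<Rightarrow> 0))"
    by (rule ev_eq_sum_superset[OF S]) (auto simp: smul_def)
  also have "\<dots> = sV c (ev sV f)"
    by (simp add: V.scale_sum_right smul_def ev_eq_sum_superset[OF S])
  finally show ?thesis .
qed

lemma ev_diff:
  assumes "fin f" and "fin h"
  shows "ev sV (f - h) = ev sV f - ev sV h"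
proof -
  have "ev sV (f + smul (- 1) h) = ev sV f + sV (- 1) (ev sV h)"
    using assms by (simp only: ev_add fin_smul ev_smul)
  then show ?thesis
    by (simp add: smul_minus_one)
qed

lemma ev_zero: "ev sV 0 = 0"
  by (simp add: ev_def)

lemma ev_delta_Lf: "ev sV (delta (Lf a)) = a"
  by (subst ev_eq_sum_superset[of "{Lf a}"]) (auto simp: delta_def)

lemma ev_sum: "(\<And>t. t \<in> A \<Longrightarrow> fin (g t)) \<Longrightarrow> ev sV (\<Sum>t\<in>A. g t) = (\<Sum>t\<in>A. ev sV (g t))"
  by (induction A rule: infinite_finite_induct) (auto simp: ev_zero ev_add fin_sum)

lemma ev_eq_0_if_no_leaves: "(\<And>x. f (Lf x) = 0) \<Longrightarrow> ev sV f = 0"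
  unfolding ev_def by (rule sum.neutral) (auto split: ltree.splits)

lemma ev_Irel: "f \<in> Irel sV act Th \<Longrightarrow> ev sV f = 0"
  unfolding Irel_def
proof (induction rule: ideal_gen.induct)
  case (gen s)
  then consider "s \<in> lin_rel sV" | "s \<in> antisym_rel \<union> jacobi_rel" | "s \<in> Kset sV act Th"
    by (auto simp: lie_rels_def)
  then show ?case
  proof cases
    case 1
    then show ?thesis
      unfolding lin_rel_def
      by (elim UnE CollectE exE conjE; simp only: ev_diff fin_diff fin_smul fin_delta ev_smul ev_delta_Lf)
        simp_all
  next
    case 2
    then show ?thesis
      unfolding antisym_rel_def jacobi_rel_def
      by (auto intro!: ev_eq_0_if_no_leaves simp: delta_def smul_def)
  next
    case 3
    then have "hom 2 s"
      unfolding Kset_def by blast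
    then show ?thesis
      unfolding hom_def by (intro ev_eq_0_if_no_leaves) fastforce
  qed
next
  case (add f h)
  then show ?case
    using fin_Irel[of _ sV act Th] unfolding Irel_def by (simp only: ev_add) simp
next
  case (scal f c)
  then show ?case
    using fin_Irel[of _ sV act Th] by (simp add: Irel_def ev_smul)
qed (auto intro: ev_zero ev_eq_0_if_no_leaves simp: brk_def)

end

lemma lie_algebra_bracket_anticommute:
  assumes "lie_algebra sG brG"
  shows "brG a b + brG b a = 0"
proof -
  have bilinear: "bilinear_map sG sG sG brG" and alternating: "\<And>a. brG a a = 0"
    using assms by (auto simp: lie_algebra_def)
  have "brG (a + b) (a + b) = brG a a + brG a b + (brG b a + brG b b)"
    using bilinear by (simp add: bilinear_map_def)
  with alternating show ?thesis
    by simp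
qed

lemma lie_module_act_zero: "lie_module sG brG sV act \<Longrightarrow> act 0 v = 0"
  using bilinear_map_def[of sG sV sV act] lie_module_def
  by (metis add_cancel_right_right add_0)

lemma Th_curly_eq_0:
  assumes "lie_leibniz_triple sG brG sV act Th"
  shows "Th (curly sV act Th x y) = 0"
proof -
  interpret Th: Vector_Spaces.linear sV sG Th
    using assms by (simp add: lie_leibniz_triple_def)
  have "lie_algebra sG brG" and "\<And>x y. Th (leib act Th x y) = brG (Th x) (Th y)"
    using assms by (simp_all add: lie_leibniz_triple_def)
  then have "Th (leib act Th x y) + Th (leib act Th y x) = 0"
    by (simp add: lie_algebra_bracket_anticommute)
  then show ?thesis
    unfolding curly_def by (simp add: Th.scale Th.add)
qed

lemma thact_eq_0: "r \<noteq> 1 \<Longrightarrow> thact sV act Th r x y = 0"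
  by (simp add: thact_def)

lemma fin_thact: "fin y \<Longrightarrow> fin (thact sV act Th r x y)"
  by (simp add: thact_def fin_actFV)

context
  fixes sV :: "'k::field \<Rightarrow> 'v::ab_group_add \<Rightarrow> 'v"
    and act :: "'g::ab_group_add \<Rightarrow> 'v \<Rightarrow> 'v"
    and Th :: "'v \<Rightarrow> 'g"
    and D :: "('v ltree \<Rightarrow> 'k) \<Rightarrow> ('v ltree \<Rightarrow> 'k)"
  assumes differential: "is_differential sV act Th D"
begin

lemma D_add: "fin f \<Longrightarrow> fin h \<Longrightarrow> D (f + h) = D f + D h"
  using differential by (simp add: is_differential_def)

lemma D_smul: "fin f \<Longrightarrow> D (smul c f) = smul c (D f)"
  using differential by (simp add: is_differential_def)

lemma D_hom: "n \<ge> 1 \<Longrightarrow> hom (Suc n) f \<Longrightarrow> hom n (D f)"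
  using differential by (simp add: is_differential_def)

lemma D_equivariant: "fin f \<Longrightarrow> D (actFV act (Th x) f) - actFV act (Th x) (D f) \<in> Irel sV act Th"
  using differential by (simp add: is_differential_def)

lemma D_brk_hom1:
  "hom 1 u \<Longrightarrow> hom 1 v \<Longrightarrow>
    D (brk u v) - smul 2 (delta (Lf (curly sV act Th (ev sV u) (ev sV v)))) \<in> Irel sV act Th"
  using differential by (simp add: is_differential_def)

lemma fin_D_delta:
  assumes "nleaves t \<ge> 2"
  shows "fin (D (delta t))"
proof -
  have "hom (Suc (nleaves t - 1)) (delta t)"
    using hom_delta[of t] assms by simp
  moreover have "1 \<le> nleaves t - 1"
    using assms by simp
  ultimately show ?thesis
    using D_hom hom_fin by blast
qed

lemma D_zero: "D 0 = 0"
  using D_add[of 0 0] by simp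

lemma D_diff:
  assumes "fin f" and "fin h"
  shows "D (f - h) = D f - D h"
proof -
  have "D (f + smul (- 1) h) = D f + smul (- 1) (D h)"
    using assms by (simp only: D_add fin_smul D_smul)
  then show ?thesis
    by (simp add: smul_minus_one)
qed

lemma D_sum: "(\<And>t. t \<in> A \<Longrightarrow> fin (g t)) \<Longrightarrow> D (\<Sum>t\<in>A. g t) = (\<Sum>t\<in>A. D (g t))"
  by (induction A rule: infinite_finite_induct) (auto simp: D_zero D_add fin_sum)

lemma D_mwedge_decomposition:
  assumes "fin x" and "fin y"
  shows "D (mwedge sV act Th p q x y)
      + (if p \<ge> 2 then mwedge sV act Th (p - 1) q (D x) y else 0)
      + smul (sgn1 p) (if q \<ge> 2 then mwedge sV act Th p (q - 1) x (D y) else 0)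
    = (D (thact sV act Th p x y) - (if q \<ge> 2 then thact sV act Th p x (D y) else 0))
      - smul (sgn1 p) (D (thact sV act Th q y x) - (if p \<ge> 2 then thact sV act Th q y (D x) else 0))
      + (if p \<ge> 2 then thact sV act Th (p - 1) (D x) y else 0)
      - smul (sgn1 (p * q)) (if q \<ge> 2 then thact sV act Th (q - 1) (D y) x else 0)"
proof -
  have "mwedge sV act Th p q x y = thact sV act Th p x y - smul (sgn1 p) (thact sV act Th q y x)"
    by (cases "q = 1") (simp_all add: mwedge_def thact_eq_0)
  then have D_part: "D (mwedge sV act Th p q x y)
      = D (thact sV act Th p x y) - smul (sgn1 p) (D (thact sV act Th q y x))"
    using assms by (simp add: D_diff D_smul fin_thact fin_smul)
  have left_part: "(if p \<ge> 2 then mwedge sV act Th (p - 1) q (D x) y else 0)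
      = (if p \<ge> 2 then thact sV act Th (p - 1) (D x) y else 0)
        + smul (sgn1 p) (if p \<ge> 2 then thact sV act Th q y (D x) else 0)"
    by (cases "q = 1") (auto simp: mwedge_def thact_eq_0 smul_def sgn1_def fun_eq_iff
        power_eq_if[of "- 1" p])
  have right_part: "smul (sgn1 p) (if q \<ge> 2 then mwedge sV act Th p (q - 1) x (D y) else 0)
      = - (if q \<ge> 2 then thact sV act Th p x (D y) else 0)
        - smul (sgn1 (p * q)) (if q \<ge> 2 then thact sV act Th (q - 1) (D y) x else 0)"
  proof (cases "q \<ge> 2")
    case True
    then obtain q' where "q = Suc q'"
      by (cases q) auto
    then show ?thesis
      by (cases "p = 1") (auto simp: mwedge_def thact_eq_0 smul_def sgn1_def fun_eq_iff
          power_add algebra_simps)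
  qed simp
  show ?thesis
    unfolding D_part left_part right_part by (simp add: smul_def fun_eq_iff algebra_simps)
qed

lemma D_thact_equivariant:
  assumes "p + q \<ge> 3" and "fin y"
  shows "D (thact sV act Th p x y) - (if q \<ge> 2 then thact sV act Th p x (D y) else 0) \<in> Irel sV act Th"
proof (cases "p = 1")
  case True
  with assms(1) have "q \<ge> 2"
    by simp
  with True show ?thesis
    using D_equivariant[OF assms(2)] by (simp add: thact_def)
next
  case False
  then show ?thesis
    by (simp add: thact_eq_0 D_zero zero_in_Irel)
qed

context
  fixes sG :: "'k \<Rightarrow> 'g \<Rightarrow> 'g"
    and brG :: "'g \<Rightarrow> 'g \<Rightarrow> 'g"
  assumes triple: "lie_leibniz_triple sG brG sV act Th"
begin

interpretation V: Vector_Spaces.vector_space sV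
  using triple by (simp add: lie_leibniz_triple_def lie_module_def)

interpretation Th: Vector_Spaces.linear sV sG Th
  using triple by (simp add: lie_leibniz_triple_def)

lemma Th_ev_D_Nd_Lf: "Th (ev sV (D (delta (Nd (Lf a) (Lf b))))) = 0"
proof -
  let ?d = "delta (Nd (Lf a) (Lf b))"
  have fin_D: "fin (D ?d)"
    by (simp add: fin_D_delta)
  have hom_Lf: "hom 1 (delta (Lf c))" for c
    using hom_delta[of "Lf c"] by simp
  have "D ?d - smul 2 (delta (Lf (curly sV act Th a b))) \<in> Irel sV act Th"
    using D_brk_hom1[OF hom_Lf hom_Lf, of a b]
    unfolding brk_delta_delta ev_delta_Lf[OF V.vector_space_axioms] .
  then have "ev sV (D ?d - smul 2 (delta (Lf (curly sV act Th a b)))) = 0"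
    by (rule ev_Irel[OF V.vector_space_axioms])
  then have "ev sV (D ?d) = sV 2 (curly sV act Th a b)"
    by (simp only: fin_D fin_smul fin_delta ev_diff[OF V.vector_space_axioms]
        ev_smul[OF V.vector_space_axioms] ev_delta_Lf[OF V.vector_space_axioms] right_minus_eq)
  then show ?thesis
    by (simp add: Th.scale Th_curly_eq_0[OF triple])
qed

lemma Th_ev_D_hom2:
  assumes "hom 2 x"
  shows "Th (ev sV (D x)) = 0"
proof -
  let ?S = "{t. x t \<noteq> 0}"
  have two_leaves: "nleaves t = 2" if "t \<in> ?S" for t
    using assms that by (simp add: hom_def)
  have fin_D: "fin (D (delta t))" if "t \<in> ?S" for t
    using two_leaves[OF that] by (simp add: fin_D_delta)
  have "D x = (\<Sum>t\<in>?S. smul (x t) (D (delta t)))"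
    by (subst fin_eq_sum_delta[OF hom_fin[OF assms]]) (simp add: D_sum fin_smul D_smul)
  then have "ev sV (D x) = ev sV (\<Sum>t\<in>?S. smul (x t) (D (delta t)))"
    by simp
  also have "\<dots> = (\<Sum>t\<in>?S. ev sV (smul (x t) (D (delta t))))"
    by (rule ev_sum[OF V.vector_space_axioms], rule fin_smul, rule fin_D)
  also have "\<dots> = (\<Sum>t\<in>?S. sV (x t) (ev sV (D (delta t))))"
    by (rule sum.cong) (simp_all add: ev_smul[OF V.vector_space_axioms] fin_D)
  finally have "ev sV (D x) = (\<Sum>t\<in>?S. sV (x t) (ev sV (D (delta t))))" .
  moreover have "Th (ev sV (D (delta t))) = 0" if "t \<in> ?S" for t
    using nleaves_eq_2D[OF two_leaves[OF that]] Th_ev_D_Nd_Lf by auto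
  ultimately show ?thesis
    by (simp add: Th.sum Th.scale)
qed

lemma thact_D_in_Irel:
  assumes "p \<ge> 2" and "hom p y" and "fin x"
  shows "thact sV act Th (p - 1) (D y) x \<in> Irel sV act Th"
proof (cases "p = 2")
  case True
  have "act 0 v = 0" for v
    using triple lie_module_act_zero[of sG brG sV act] by (simp add: lie_leibniz_triple_def)
  with True assms show ?thesis
    by (simp add: thact_def Th_ev_D_hom2 actFV_zero_in_Irel)
next
  case False
  with assms(1) show ?thesis
    by (simp add: thact_eq_0 zero_in_Irel)
qed

end

end

theorem mainTheorem9:
  fixes sG :: "'k::field_char_0 \<Rightarrow> 'g::ab_group_add \<Rightarrow> 'g"
    and brG :: "'g \<Rightarrow> 'g \<Rightarrow> 'g"
    and sV :: "'k \<Rightarrow> 'v::ab_group_add \<Rightarrow> 'v"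
    and act :: "'g \<Rightarrow> 'v \<Rightarrow> 'v"
    and Th :: "'v \<Rightarrow> 'g"
    and D :: "('v ltree \<Rightarrow> 'k) \<Rightarrow> ('v ltree \<Rightarrow> 'k)"
  assumes "lie_leibniz_triple sG brG sV act Th"
    and "is_differential sV act Th D"
  shows "\<forall>p q x y. p \<ge> 1 \<longrightarrow> q \<ge> 1 \<longrightarrow> p + q \<ge> 3 \<longrightarrow> hom p x \<longrightarrow> hom q y \<longrightarrow>
           D (mwedge sV act Th p q x y)
           + (if p \<ge> 2 then mwedge sV act Th (p - 1) q (D x) y else 0)
           + smul (sgn1 p) (if q \<ge> 2 then mwedge sV act Th p (q - 1) x (D y) else 0)
           \<in> Irel sV act Th"
proof (intro allI impI)
  note triple = assms(1) and differential = assms(2)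
  fix p q :: nat and x y :: "'v ltree \<Rightarrow> 'k"
  assume "p \<ge> 1" "q \<ge> 1" and degree: "p + q \<ge> 3" and x: "hom p x" and y: "hom q y"
  then have "fin x" "fin y"
    by (simp_all add: hom_fin)
  have "D (thact sV act Th p x y) - (if q \<ge> 2 then thact sV act Th p x (D y) else 0) \<in> Irel sV act Th"
    and "D (thact sV act Th q y x) - (if p \<ge> 2 then thact sV act Th q y (D x) else 0) \<in> Irel sV act Th"
    using degree \<open>fin x\<close> \<open>fin y\<close> by (simp_all add: D_thact_equivariant[OF differential])
  moreover have "(if p \<ge> 2 then thact sV act Th (p - 1) (D x) y else 0) \<in> Irel sV act Th"
    and "(if q \<ge> 2 then thact sV act Th (q - 1) (D y) x else 0) \<in> Irel sV act Th"
    using thact_D_in_Irel[OF differential triple _ x \<open>fin y\<close>]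
      thact_D_in_Irel[OF differential triple _ y \<open>fin x\<close>]
    by (simp_all add: zero_in_Irel)
  ultimately show "D (mwedge sV act Th p q x y)
           + (if p \<ge> 2 then mwedge sV act Th (p - 1) q (D x) y else 0)
           + smul (sgn1 p) (if q \<ge> 2 then mwedge sV act Th p (q - 1) x (D y) else 0)
           \<in> Irel sV act Th"
    unfolding D_mwedge_decomposition[OF differential \<open>fin x\<close> \<open>fin y\<close>] Irel_def
    by - (assumption | rule ideal_gen_diff ideal_gen.add ideal_gen.scal)+
qed

end
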